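(* Let $G=(V,E)$ be a finite, connected, simple, undirected, unweighted graph and $i\sim j$ an edge with $d_i\le d_j$. Let $\Omega_j=\sharp_\Delta(i,j)\cup\{j\}$. If $\mathrm{Ric}(i,j)\le-2+\delta$ for some $0<\delta<(1+\gamma_{\max}(i,j))^{-1}$, then $$\frac{1}{|\Omega_j|}\sum_{k\in\Omega_j}b(k)\ \ge\ \delta^{-1}.$$
   Context: Betweenness centrality: $b(k)=\sum_{s,t\in V,\ s\ne t,\ s\ne k,\ t\ne k}\sigma_{st}(k)/\sigma_{st}$, where $\sigma_{st}$ is the number of shortest paths from $s$ to $t$ and $\sigma_{st}(k)$ the number of those passing through $k$. For an edge $i\sim j$ with degrees $d_i,d_j$ and neighbour sets $S_1(\cdot)$: $\sharp_\Delta=S_1(i)\cap S_1(j)$; $\sharp_\square^i=\{k\in S_1(i)\setminus (S_1(j)\cup\{j\}) : \exists\, w\in (S_1(k)\cap S_1(j))\setminus (S_1(i)\cup\{i\})\}$, $\sharp_\square^j$ symmetric; $\gamma_{\max}=\max\big\{\max_{k\in\sharp_\square^i}|(S_1(k)\cap S_1(j))\setminus(S_1(i)\cup\{i\})|,\ \max_{w\in\sharp_\square^j}|(S_1(w)\cap S_1(i))\setminus(S_1(j)\cup\{j\})|\big\}$, with $\gamma_{\max}=0$ if $\sharp_\square^i=\emptyset$. $\mathrm{Ric}(i,j)=0$ if $\min\{d_i,d_j\}=1$, otherwise $\mathrm{Ric}(i,j)=\frac{2}{d_i}+\frac{2}{d_j}-2+\frac{2|\sharp_\Delta|}{\max\{d_i,d_j\}}+\frac{|\sharp_\Delta|}{\min\{d_i,d_j\}}+\frac{\gamma_{\max}^{-1}}{\max\{d_i,d_j\}}(|\sharp_\square^i|+|\sharp_\square^j|)$,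 the last term being $0$ when $\sharp_\square^i=\emptyset$. *)

theory Defs
  imports Main "HOL-Library.Extended_Real"
begin

definition simple_graph :: "'a set \<Rightarrow> ('a \<Rightarrow> 'a \<Rightarrow> bool) \<Rightarrow> bool" where
  "simple_graph V E \<longleftrightarrow> finite V \<and> (\<forall>x y. E x y \<longrightarrow> x \<in> V \<and> y \<in> V)
     \<and> (\<forall>x y. E x y \<longrightarrow> E y x) \<and> (\<forall>x. \<not> E x x)"

definition walk :: "'a set \<Rightarrow> ('a \<Rightarrow> 'a \<Rightarrow> bool) \<Rightarrow> 'a \<Rightarrow> 'a \<Rightarrow> 'a list \<Rightarrow> bool" where
  "walk V E s t p \<longleftrightarrow> p \<noteq> [] \<and> hd p = s \<and> last p = t \<and> set p \<subseteq> V
     \<and> (\<forall>n. Suc n < length p \<longrightarrow> E (p ! n) (p ! Suc n))"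

definition connected_graph :: "'a set \<Rightarrow> ('a \<Rightarrow> 'a \<Rightarrow> bool) \<Rightarrow> bool" where
  "connected_graph V E \<longleftrightarrow> (\<forall>s\<in>V. \<forall>t\<in>V. \<exists>p. walk V E s t p)"

definition gdist :: "'a set \<Rightarrow> ('a \<Rightarrow> 'a \<Rightarrow> bool) \<Rightarrow> 'a \<Rightarrow> 'a \<Rightarrow> nat" where
  "gdist V E s t = (LEAST n. \<exists>p. walk V E s t p \<and> length p = Suc n)"

definition shortest_paths :: "'a set \<Rightarrow> ('a \<Rightarrow> 'a \<Rightarrow> bool) \<Rightarrow> 'a \<Rightarrow> 'a \<Rightarrow> 'a list set" where
  "shortest_paths V E s t = {p. walk V E s t p \<and> length p = Suc (gdist V E s t)}"

definition sigma :: "'a set \<Rightarrow> ('a \<Rightarrow> 'a \<Rightarrow> bool) \<Rightarrow> 'a \<Rightarrow> 'a \<Rightarrow> nat" where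
  "sigma V E s t = card (shortest_paths V E s t)"

definition sigma_via :: "'a set \<Rightarrow> ('a \<Rightarrow> 'a \<Rightarrow> bool) \<Rightarrow> 'a \<Rightarrow> 'a \<Rightarrow> 'a \<Rightarrow> nat" where
  "sigma_via V E s t k = card {p \<in> shortest_paths V E s t. k \<in> set p}"

definition betweenness :: "'a set \<Rightarrow> ('a \<Rightarrow> 'a \<Rightarrow> bool) \<Rightarrow> 'a \<Rightarrow> real" where
  "betweenness V E k = (\<Sum>(s,t)\<in>{(s,t). s \<in> V \<and> t \<in> V \<and> s \<noteq> t \<and> s \<noteq> k \<and> t \<noteq> k}.
      real (sigma_via V E s t k) / real (sigma V E s t))"

definition nbrs :: "'a set \<Rightarrow> ('a \<Rightarrow> 'a \<Rightarrow> bool) \<Rightarrow> 'a \<Rightarrow> 'a set" where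
  "nbrs V E x = {y \<in> V. E x y}"

definition deg :: "'a set \<Rightarrow> ('a \<Rightarrow> 'a \<Rightarrow> bool) \<Rightarrow> 'a \<Rightarrow> nat" where
  "deg V E x = card (nbrs V E x)"

definition triangles :: "'a set \<Rightarrow> ('a \<Rightarrow> 'a \<Rightarrow> bool) \<Rightarrow> 'a \<Rightarrow> 'a \<Rightarrow> 'a set" where
  "triangles V E i j = nbrs V E i \<inter> nbrs V E j"

definition sq_wit :: "'a set \<Rightarrow> ('a \<Rightarrow> 'a \<Rightarrow> bool) \<Rightarrow> 'a \<Rightarrow> 'a \<Rightarrow> 'a \<Rightarrow> 'a set" where
  "sq_wit V E i j k = (nbrs V E k \<inter> nbrs V E j) - (nbrs V E i \<union> {i})"

text \<open>\<sharp>_\<box>^i for the edge (i,j); \<sharp>_\<box>^j is squares V E j i.\<close>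
definition squares :: "'a set \<Rightarrow> ('a \<Rightarrow> 'a \<Rightarrow> bool) \<Rightarrow> 'a \<Rightarrow> 'a \<Rightarrow> 'a set" where
  "squares V E i j = {k \<in> nbrs V E i - (nbrs V E j \<union> {j}). sq_wit V E i j k \<noteq> {}}"

definition gamma_max :: "'a set \<Rightarrow> ('a \<Rightarrow> 'a \<Rightarrow> bool) \<Rightarrow> 'a \<Rightarrow> 'a \<Rightarrow> nat" where
  "gamma_max V E i j = (if squares V E i j = {} then 0 else
     max (Max ((\<lambda>k. card (sq_wit V E i j k)) ` squares V E i j))
         (Max ((\<lambda>w. card (sq_wit V E j i w)) ` squares V E j i)))"

definition Ric :: "'a set \<Rightarrow> ('a \<Rightarrow> 'a \<Rightarrow> bool) \<Rightarrow> 'a \<Rightarrow> 'a \<Rightarrow> real" where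
  "Ric V E i j = (let di = real (deg V E i); dj = real (deg V E j);
       t = real (card (triangles V E i j)) in
     if min di dj = 1 then 0 else
       2 / di + 2 / dj - 2 + 2 * t / max di dj + t / min di dj
       + (if squares V E i j = {} then 0 else
           (inverse (real (gamma_max V E i j)) / max di dj)
             * real (card (squares V E i j) + card (squares V E j i))))"

end

theory Submission
  imports Defs
begin

text \<open>Let \<open>t\<close> be a neighbour of \<open>j\<close> at distance two from \<open>i\<close>. The shortest \<open>i\<close>--\<open>t\<close> paths are
  the detours through common neighbours of \<open>i\<close> and \<open>t\<close>; those missing \<open>\<Omega>\<^sub>j\<close> run through
  square witnesses of \<open>t\<close>, of which there are at most \<open>\<gamma>\<^sub>m\<^sub>a\<^sub>x\<close>, and at least one
  (through \<open>j\<close>) meets \<open>\<Omega>\<^sub>j\<close>. So each of the \<open>d\<^sub>j - 1 - |\<sharp>\<^sub>\<Delta>|\<close> such targets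
  contributes at least \<open>1/(1 + \<gamma>\<^sub>m\<^sub>a\<^sub>x)\<close> to \<open>\<Sum>\<^sub>k\<^sub>\<in>\<^sub>\<Omega> b(k)\<close>, and a full \<open>1\<close>
  unless it lies in \<open>\<sharp>\<^sub>\<box>\<^sup>j\<close>. On the other side, \<open>Ric(i,j) \<le> -2 + \<delta>\<close> forces
  \<open>4 + 3|\<sharp>\<^sub>\<Delta>| + |\<sharp>\<^sub>\<box>\<^sup>j|/\<gamma>\<^sub>m\<^sub>a\<^sub>x \<le> \<delta> d\<^sub>j\<close>, and the two bounds combine to the claim.\<close>

lemma simple_graph_adj:
  assumes "simple_graph V E" "E x y"
  shows "x \<in> V" "y \<in> V" "E y x"
  using assms unfolding simple_graph_def by metis+

lemma simple_graph_irrefl: "simple_graph V E \<Longrightarrow> \<not> E x x"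
  by (simp add: simple_graph_def)

lemma mem_nbrs_iff:
  assumes "simple_graph V E"
  shows "y \<in> nbrs V E x \<longleftrightarrow> E x y"
  using assms by (auto simp: nbrs_def dest: simple_graph_adj)

lemma finite_nbrs: "simple_graph V E \<Longrightarrow> finite (nbrs V E x)"
  by (simp add: nbrs_def simple_graph_def)

lemma walk_three_iff:
  "walk V E s t [a, b, c] \<longleftrightarrow> a = s \<and> c = t \<and> a \<in> V \<and> b \<in> V \<and> c \<in> V \<and> E a b \<and> E b c"
proof -
  have "(\<forall>n. Suc n < 3 \<longrightarrow> E ([a, b, c] ! n) ([a, b, c] ! Suc n)) \<longleftrightarrow> E a b \<and> E b c"
    by (auto simp: less_Suc_eq numeral_3_eq_3)
  then show ?thesis unfolding walk_def by auto
qed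

lemma walk_two_iff: "walk V E s t [a, b] \<longleftrightarrow> a = s \<and> b = t \<and> a \<in> V \<and> b \<in> V \<and> E a b"
  unfolding walk_def by (auto simp: less_Suc_eq)

lemma gdist_eq_2:
  assumes "simple_graph V E" "s \<noteq> t" "\<not> E s t" "E s k" "E k t"
  shows "gdist V E s t = 2"
  unfolding gdist_def
proof (rule Least_equality)
  show "\<exists>p. walk V E s t p \<and> length p = Suc 2"
    using assms by (intro exI[of _ "[s, k, t]"]) (simp add: walk_three_iff simple_graph_adj)
next
  fix n assume "\<exists>p. walk V E s t p \<and> length p = Suc n"
  then obtain p where p: "walk V E s t p" "length p = Suc n" by blast
  show "2 \<le> n"
  proof (rule ccontr)
    assume "\<not> 2 \<le> n"
    then consider "n = 0" | "n = 1" by linarith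
    then show False
    proof cases
      case 1
      then obtain a where "p = [a]" using p(2) by (auto simp: length_Suc_conv)
      then show False using p(1) assms(2) by (auto simp: walk_def)
    next
      case 2
      then obtain a b where "p = [a, b]" using p(2) by (auto simp: length_Suc_conv)
      then show False using p(1) assms(3) by (auto simp: walk_two_iff)
    qed
  qed
qed

lemma shortest_paths_dist2:
  assumes sg: "simple_graph V E" and "s \<noteq> t" "\<not> E s t" "E s k" "E k t"
  shows "shortest_paths V E s t = (\<lambda>x. [s, x, t]) ` (nbrs V E s \<inter> nbrs V E t)"
proof -
  have len: "p \<in> shortest_paths V E s t \<longleftrightarrow> walk V E s t p \<and> length p = 3" for p
    using gdist_eq_2[OF assms] by (simp add: shortest_paths_def)
  show ?thesis
  proof (intro set_eqI iffI)
    fix p assume "p \<in> shortest_paths V E s t"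
    then have p: "walk V E s t p" "length p = 3" using len by blast+
    then obtain a b c where "p = [a, b, c]" by (auto simp: numeral_3_eq_3 length_Suc_conv)
    with p(1) show "p \<in> (\<lambda>x. [s, x, t]) ` (nbrs V E s \<inter> nbrs V E t)"
      using sg simple_graph_adj(3)[OF sg] by (auto simp: walk_three_iff mem_nbrs_iff)
  next
    fix p assume "p \<in> (\<lambda>x. [s, x, t]) ` (nbrs V E s \<inter> nbrs V E t)"
    then show "p \<in> shortest_paths V E s t"
      using sg by (auto simp: len walk_three_iff mem_nbrs_iff dest: simple_graph_adj)
  qed
qed

lemma sum_sigma_via_dist2:
  assumes sg: "simple_graph V E" and st: "s \<noteq> t" "\<not> E s t" "E s k" "E k t"
    and \<Omega>: "finite \<Omega>" "s \<notin> \<Omega>" "t \<notin> \<Omega>"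
  shows "(\<Sum>x\<in>\<Omega>. real (sigma_via V E s t x) / real (sigma V E s t))
    = real (card (\<Omega> \<inter> (nbrs V E s \<inter> nbrs V E t))) / real (card (nbrs V E s \<inter> nbrs V E t))"
proof -
  define M where "M = nbrs V E s \<inter> nbrs V E t"
  have SP: "shortest_paths V E s t = (\<lambda>x. [s, x, t]) ` M"
    using shortest_paths_dist2[OF assms(1-5)] by (simp add: M_def)
  have "sigma V E s t = card M"
    unfolding sigma_def SP by (rule card_image) (simp add: inj_on_def)
  moreover have "real (sigma_via V E s t x) = (if x \<in> M then 1 else 0)" if "x \<in> \<Omega>" for x
  proof -
    have "{p \<in> shortest_paths V E s t. x \<in> set p} = (if x \<in> M then {[s, x, t]} else {})"
      using that \<Omega> unfolding SP by auto
    then show ?thesis by (simp add: sigma_via_def)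
  qed
  ultimately have "(\<Sum>x\<in>\<Omega>. real (sigma_via V E s t x) / real (sigma V E s t))
      = (\<Sum>x\<in>\<Omega>. (if x \<in> M then 1 else 0)) / real (card M)"
    by (simp add: sum_divide_distrib)
  also have "(\<Sum>x\<in>\<Omega>. (if x \<in> M then 1 else 0 :: real)) = real (card (\<Omega> \<inter> M))"
    using \<Omega>(1) by (simp add: sum.If_cases)
  finally show ?thesis by (simp add: M_def)
qed

lemma betweenness_ge_sum_from_source:
  assumes "finite V" "s \<in> V" "s \<noteq> k" "A \<subseteq> V - {s, k}"
  shows "(\<Sum>t\<in>A. real (sigma_via V E s t k) / real (sigma V E s t)) \<le> betweenness V E k"
proof -
  define P where "P = {(s, t). s \<in> V \<and> t \<in> V \<and> s \<noteq> t \<and> s \<noteq> k \<and> t \<noteq> k}"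
  define f where "f = (\<lambda>(s, t). real (sigma_via V E s t k) / real (sigma V E s t))"
  have "(\<Sum>t\<in>A. real (sigma_via V E s t k) / real (sigma V E s t)) = sum f (Pair s ` A)"
    by (simp add: sum.reindex inj_on_def f_def)
  also have "\<dots> \<le> sum f P"
  proof (rule sum_mono2)
    show "finite P"
      by (rule finite_subset[of _ "V \<times> V"]) (auto simp: P_def assms(1))
  qed (use assms in \<open>auto simp: P_def f_def\<close>)
  also have "\<dots> = betweenness V E k" by (simp add: betweenness_def P_def f_def)
  finally show ?thesis .
qed

lemma inverse_one_plus_le_ratio:
  fixes m c :: real
  assumes "1 \<le> m" "0 \<le> c"
  shows "1 / (1 + c) \<le> m / (m + c)"
proof -
  have "m + c \<le> m * (1 + c)"
    using mult_right_mono[OF assms] by (simp add: algebra_simps)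
  then show ?thesis using assms by (simp add: divide_simps)
qed

definition far_nbrs :: "'a set \<Rightarrow> ('a \<Rightarrow> 'a \<Rightarrow> bool) \<Rightarrow> 'a \<Rightarrow> 'a \<Rightarrow> 'a set" where
  "far_nbrs V E i j = nbrs V E j - (nbrs V E i \<union> {i})"

lemma card_nbrs_split:
  assumes sg: "simple_graph V E" and "E i j"
  shows "card (nbrs V E j) = card (far_nbrs V E i j) + card (triangles V E i j) + 1"
proof -
  have fin: "finite (far_nbrs V E i j)" "finite (triangles V E i j)"
    using finite_nbrs[OF sg] by (auto simp: far_nbrs_def triangles_def)
  have "nbrs V E j = (far_nbrs V E i j \<union> triangles V E i j) \<union> {i}"
    using assms simple_graph_adj[OF sg] by (auto simp: far_nbrs_def triangles_def mem_nbrs_iff)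
  moreover have "i \<notin> far_nbrs V E i j \<union> triangles V E i j"
    using simple_graph_irrefl[OF sg] by (auto simp: far_nbrs_def triangles_def mem_nbrs_iff[OF sg])
  moreover have "far_nbrs V E i j \<inter> triangles V E i j = {}"
    by (auto simp: far_nbrs_def triangles_def)
  ultimately show ?thesis using fin by (simp add: card_Un_disjoint)
qed

lemma squares_subset_far_nbrs: "squares V E j i \<subseteq> far_nbrs V E i j"
  by (auto simp: squares_def far_nbrs_def)

lemma squares_nonempty_swap:
  assumes sg: "simple_graph V E" and "squares V E j i \<noteq> {}"
  shows "squares V E i j \<noteq> {}"
proof -
  obtain t w where t: "t \<in> squares V E j i" and w: "w \<in> sq_wit V E j i t"
    using assms(2) by (auto simp: squares_def)
  then have "t \<in> sq_wit V E i j w" "w \<in> nbrs V E i - (nbrs V E j \<union> {j})"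
    using simple_graph_adj(3)[OF sg] by (auto simp: squares_def sq_wit_def mem_nbrs_iff[OF sg])
  then show ?thesis by (auto simp: squares_def)
qed

lemma card_sq_wit_le_gamma_max:
  assumes sg: "simple_graph V E" and t: "t \<in> squares V E j i"
  shows "card (sq_wit V E j i t) \<le> gamma_max V E i j"
proof -
  have "finite (squares V E j i)"
    using finite_nbrs[OF sg] by (rule finite_subset[rotated]) (auto simp: squares_def)
  then have "card (sq_wit V E j i t) \<le> Max ((\<lambda>w. card (sq_wit V E j i w)) ` squares V E j i)"
    using t by (intro Max_ge) auto
  then show ?thesis using squares_nonempty_swap[OF sg] t by (auto simp: gamma_max_def)
qed

lemma path_fraction_far_nbr:
  assumes sg: "simple_graph V E" and ij: "E i j" and t: "t \<in> far_nbrs V E i j"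
  shows "1 / (1 + real (card (sq_wit V E j i t)))
    \<le> (\<Sum>k\<in>triangles V E i j \<union> {j}. real (sigma_via V E i t k) / real (sigma V E i t))"
proof -
  define \<Omega> where "\<Omega> = triangles V E i j \<union> {j}"
  define M where "M = nbrs V E i \<inter> nbrs V E t"
  have jt: "E j t" and it: "i \<noteq> t" "\<not> E i t"
    using t sg by (auto simp: far_nbrs_def mem_nbrs_iff)
  have fin: "finite \<Omega>" "finite M"
    using finite_nbrs[OF sg] by (auto simp: \<Omega>_def M_def triangles_def)
  have "i \<notin> \<Omega>" "t \<notin> \<Omega>"
    using t simple_graph_irrefl[OF sg] ij
    by (auto simp: \<Omega>_def triangles_def far_nbrs_def mem_nbrs_iff[OF sg])
  then have sum_eq: "(\<Sum>k\<in>\<Omega>. real (sigma_via V E i t k) / real (sigma V E i t))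
      = real (card (\<Omega> \<inter> M)) / real (card M)"
    using sum_sigma_via_dist2[OF sg it ij jt fin(1)] by (simp add: M_def)
  have "M = (\<Omega> \<inter> M) \<union> sq_wit V E j i t" "(\<Omega> \<inter> M) \<inter> sq_wit V E j i t = {}"
    by (auto simp: \<Omega>_def M_def triangles_def sq_wit_def)
  then have card_M: "card M = card (\<Omega> \<inter> M) + card (sq_wit V E j i t)"
    using fin(2) by (metis card_Un_disjoint finite_Un)
  have "j \<in> \<Omega> \<inter> M"
    using ij jt simple_graph_adj(3)[OF sg] by (auto simp: \<Omega>_def M_def mem_nbrs_iff[OF sg])
  then have "1 \<le> card (\<Omega> \<inter> M)"
    using fin(2) by (metis One_nat_def Suc_leI card_gt_0_iff empty_iff finite_Int)
  then have "1 / (1 + real (card (sq_wit V E j i t))) \<le> real (card (\<Omega> \<inter> M)) / real (card M)"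
    unfolding card_M of_nat_add by (intro inverse_one_plus_le_ratio) simp_all
  then show ?thesis using sum_eq by (simp add: \<Omega>_def)
qed

lemma betweenness_sum_ge_far_nbrs:
  assumes sg: "simple_graph V E" and ij: "E i j"
  shows "(\<Sum>t\<in>far_nbrs V E i j. 1 / (1 + real (card (sq_wit V E j i t))))
    \<le> (\<Sum>k\<in>triangles V E i j \<union> {j}. betweenness V E k)"
proof -
  define \<Omega> where "\<Omega> = triangles V E i j \<union> {j}"
  define h where "h k t = real (sigma_via V E i t k) / real (sigma V E i t)" for k t
  have fin: "finite V" using sg by (simp add: simple_graph_def)
  have "(\<Sum>t\<in>far_nbrs V E i j. 1 / (1 + real (card (sq_wit V E j i t))))
      \<le> (\<Sum>t\<in>far_nbrs V E i j. \<Sum>k\<in>\<Omega>. h k t)"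
    using path_fraction_far_nbr[OF sg ij] by (intro sum_mono) (simp add: \<Omega>_def h_def)
  also have "\<dots> = (\<Sum>k\<in>\<Omega>. \<Sum>t\<in>far_nbrs V E i j. h k t)"
    by (rule sum.swap)
  also have "\<dots> \<le> (\<Sum>k\<in>\<Omega>. betweenness V E k)"
  proof (intro sum_mono)
    fix k assume k: "k \<in> \<Omega>"
    have "i \<in> V" "i \<noteq> k" "far_nbrs V E i j \<subseteq> V - {i, k}"
      using k ij simple_graph_adj[OF sg] simple_graph_irrefl[OF sg]
      by (auto simp: \<Omega>_def triangles_def far_nbrs_def mem_nbrs_iff[OF sg] nbrs_def)
    then show "(\<Sum>t\<in>far_nbrs V E i j. h k t) \<le> betweenness V E k"
      unfolding h_def by (intro betweenness_ge_sum_from_source fin)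
  qed
  finally show ?thesis by (simp add: \<Omega>_def)
qed

lemma sum_far_nbrs_ge:
  fixes i j :: 'a
  assumes sg: "simple_graph V E"
  defines "\<gamma> \<equiv> real (gamma_max V E i j)"
  shows "real (card (far_nbrs V E i j)) - real (card (squares V E j i)) * \<gamma> / (1 + \<gamma>)
    \<le> (\<Sum>t\<in>far_nbrs V E i j. 1 / (1 + real (card (sq_wit V E j i t))))"
proof -
  define F where "F = far_nbrs V E i j"
  define Q where "Q = squares V E j i"
  have fin: "finite F" using finite_nbrs[OF sg] by (simp add: F_def far_nbrs_def)
  have QF: "Q \<subseteq> F" by (simp add: Q_def F_def squares_subset_far_nbrs)
  have "1 - (if t \<in> Q then \<gamma> / (1 + \<gamma>) else 0) \<le> 1 / (1 + real (card (sq_wit V E j i t)))"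
    if "t \<in> F" for t
  proof (cases "t \<in> Q")
    case True
    then have "real (card (sq_wit V E j i t)) \<le> \<gamma>"
      using card_sq_wit_le_gamma_max[OF sg] by (simp add: Q_def \<gamma>_def)
    then have "1 / (1 + \<gamma>) \<le> 1 / (1 + real (card (sq_wit V E j i t)))"
      by (intro divide_left_mono) auto
    moreover have "1 - \<gamma> / (1 + \<gamma>) = 1 / (1 + \<gamma>)"
      by (simp add: \<gamma>_def field_simps)
    ultimately show ?thesis using True by simp
  next
    case False
    then have "sq_wit V E j i t = {}" using that by (auto simp: Q_def F_def squares_def far_nbrs_def)
    then show ?thesis using False by simp
  qed
  then have "(\<Sum>t\<in>F. 1 - (if t \<in> Q then \<gamma> / (1 + \<gamma>) else 0))
      \<le> (\<Sum>t\<in>F. 1 / (1 + real (card (sq_wit V E j i t))))"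
    by (rule sum_mono)
  moreover have "(\<Sum>t\<in>F. 1 - (if t \<in> Q then \<gamma> / (1 + \<gamma>) else 0))
      = real (card F) - real (card Q) * \<gamma> / (1 + \<gamma>)"
    using fin QF by (simp add: sum_subtractf sum.If_cases Int_absorb1)
  ultimately show ?thesis by (simp add: F_def Q_def)
qed

lemma deg_pos_if_adj: "simple_graph V E \<Longrightarrow> E i j \<Longrightarrow> 1 \<le> deg V E i"
  by (metis One_nat_def Suc_leI card_gt_0_iff deg_def empty_iff finite_nbrs mem_nbrs_iff)

text \<open>A degree-one endpoint gives \<open>Ric = 0\<close>, so strongly negative curvature forces
  \<open>min d\<^sub>i d\<^sub>j = d\<^sub>i \<ge> 2\<close>; then \<open>2/d\<^sub>i \<ge> 2/d\<^sub>j\<close> and \<open>t/d\<^sub>i \<ge> t/d\<^sub>j\<close>, and the square term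
  is at least \<open>|\<sharp>\<^sub>\<box>\<^sup>j|/(\<gamma>\<^sub>m\<^sub>a\<^sub>x d\<^sub>j)\<close>.\<close>

lemma Ric_le_imp_deg_bound:
  fixes \<delta> :: real
  assumes sg: "simple_graph V E" and ij: "E i j" and deg: "deg V E i \<le> deg V E j"
    and "\<delta> < 1" and Ric: "Ric V E i j \<le> -2 + \<delta>"
  shows "4 + 3 * real (card (triangles V E i j))
      + real (card (squares V E j i)) / real (gamma_max V E i j) \<le> \<delta> * real (deg V E j)"
proof -
  define di where "di = real (deg V E i)"
  define dj where "dj = real (deg V E j)"
  define tr where "tr = real (card (triangles V E i j))"
  define q where "q = real (card (squares V E j i))"
  define \<gamma> where "\<gamma> = real (gamma_max V E i j)"
  define sq where "sq = (if squares V E i j = {} then 0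
      else inverse \<gamma> / dj * real (card (squares V E i j) + card (squares V E j i)))"
  have dij: "1 \<le> di" "di \<le> dj"
    using deg_pos_if_adj[OF sg ij] deg by (simp_all add: di_def dj_def)
  have Ric_eq: "Ric V E i j = (if min di dj = 1 then 0
      else 2 / di + 2 / dj - 2 + 2 * tr / max di dj + tr / min di dj + sq)"
    using dij by (simp add: Ric_def Let_def di_def dj_def tr_def sq_def \<gamma>_def)
  have "di \<noteq> 1"
    using Ric Ric_eq dij \<open>\<delta> < 1\<close> by (auto simp: min_def)
  then have di: "1 < di" using dij by simp
  have Ric_le: "2 / di + 2 / dj - 2 + 2 * tr / dj + tr / di + sq \<le> -2 + \<delta>"
    using Ric Ric_eq dij di by (simp add: min_def max_def)
  have sq: "q / \<gamma> / dj \<le> sq"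
  proof (cases "squares V E i j = {}")
    case True
    then have "squares V E j i = {}"
      using squares_nonempty_swap[OF sg] by blast
    then show ?thesis using True by (simp add: q_def sq_def)
  next
    case False
    have "q / \<gamma> / dj = inverse \<gamma> / dj * q" by (simp add: divide_inverse)
    also have "\<dots> \<le> inverse \<gamma> / dj * real (card (squares V E i j) + card (squares V E j i))"
      using di dij by (intro mult_left_mono) (auto simp: q_def \<gamma>_def)
    finally show ?thesis using False by (simp add: sq_def)
  qed
  have "2 / dj \<le> 2 / di" "tr / dj \<le> tr / di"
    using di dij by (auto intro!: divide_left_mono simp: tr_def)
  then have "(4 + 3 * tr + q / \<gamma>) / dj \<le> \<delta>"
    using Ric_le sq by (simp add: add_divide_distrib)
  then show ?thesis
    using di dij by (simp add: pos_divide_le_eq mult.commute dj_def tr_def q_def \<gamma>_def)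
qed

lemma less_one_if_mult_one_plus_less:
  fixes \<delta> \<gamma> :: real
  assumes "0 < \<delta>" "\<delta> * (1 + \<gamma>) < 1" "0 \<le> \<gamma>"
  shows "\<delta> < 1"
proof -
  have "0 \<le> \<delta> * \<gamma>" using assms(1,3) by simp
  then show ?thesis using assms(2) by (simp add: algebra_simps)
qed

lemma square_term_le:
  fixes \<delta> \<gamma> q :: real
  assumes "0 < \<delta>" "\<delta> * (1 + \<gamma>) < 1" "0 \<le> \<gamma>" "0 \<le> q"
  shows "\<delta> * (q * \<gamma> / (1 + \<gamma>)) \<le> q / \<gamma>"
proof (cases "\<gamma> = 0")
  case False
  then have \<gamma>: "0 < \<gamma>" using assms(3) by simp
  have "\<delta> * (1 + \<gamma>) * \<gamma>\<^sup>2 \<le> \<gamma>\<^sup>2"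
    using mult_right_mono[of "\<delta> * (1 + \<gamma>)" 1 "\<gamma>\<^sup>2"] assms(2) by simp
  then have "\<delta> * \<gamma>\<^sup>2 \<le> \<gamma>\<^sup>2 / (1 + \<gamma>)"
    using assms(3) by (simp add: pos_le_divide_eq algebra_simps)
  also have "\<dots> \<le> 1 + \<gamma>"
    using \<gamma> by (simp add: pos_divide_le_eq power2_eq_square algebra_simps)
  finally have "\<delta> * \<gamma>\<^sup>2 \<le> 1 + \<gamma>" .
  then have "q * (\<delta> * \<gamma>\<^sup>2) \<le> q * (1 + \<gamma>)"
    using assms(4) by (rule mult_left_mono)
  then show ?thesis
    using \<gamma> by (simp add: field_simps power2_eq_square)
qed simp

lemma inverse_le_average:
  fixes \<delta> \<gamma> tr q d S :: real
  assumes "0 < \<delta>" "\<delta> * (1 + \<gamma>) < 1" "0 \<le> \<gamma>" "0 \<le> tr" "0 \<le> q"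
    and deg: "4 + 3 * tr + q / \<gamma> \<le> \<delta> * d"
    and S: "(d - 1 - tr) - q * \<gamma> / (1 + \<gamma>) \<le> S"
  shows "inverse \<delta> \<le> S / (tr + 1)"
proof -
  have "\<delta> < 1"
    using assms(1-3) by (rule less_one_if_mult_one_plus_less)
  then have "\<delta> * (1 + tr) \<le> 1 + tr"
    using assms(4) by (simp add: mult_left_le_one_le)
  moreover have "\<delta> * ((d - 1 - tr) - q * \<gamma> / (1 + \<gamma>)) \<le> \<delta> * S"
    using S assms(1) by (simp add: mult_left_mono)
  ultimately have "tr + 1 \<le> \<delta> * S"
    using deg square_term_le[OF assms(1-3,5)] assms(4) by (simp add: algebra_simps)
  then show ?thesis
    using assms(1,4) by (simp add: field_simps)
qed

theorem mainTheorem10: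
  fixes V :: "'a set" and E :: "'a \<Rightarrow> 'a \<Rightarrow> bool" and i j :: 'a and \<delta> :: real
  assumes "simple_graph V E" and "connected_graph V E"
    and "E i j" and "deg V E i \<le> deg V E j"
    and "0 < \<delta>" and "\<delta> < inverse (1 + real (gamma_max V E i j))"
    and "Ric V E i j \<le> -2 + \<delta>"
  shows "(1 / real (card (triangles V E i j \<union> {j})))
           * (\<Sum>k\<in>triangles V E i j \<union> {j}. betweenness V E k) \<ge> inverse \<delta>"
proof -
  note sg = assms(1) and ij = assms(3)
  define \<gamma> where "\<gamma> = real (gamma_max V E i j)"
  define tr where "tr = real (card (triangles V E i j))"
  have \<delta>\<gamma>: "\<delta> * (1 + \<gamma>) < 1"
    using assms(6) by (simp add: \<gamma>_def field_simps)
  then have "\<delta> < 1"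
    using assms(5) less_one_if_mult_one_plus_less \<gamma>_def of_nat_0_le_iff by blast
  then have deg: "4 + 3 * tr + real (card (squares V E j i)) / \<gamma> \<le> \<delta> * real (deg V E j)"
    using Ric_le_imp_deg_bound[OF sg ij assms(4) _ assms(7)] by (simp add: tr_def \<gamma>_def)
  have "(real (deg V E j) - 1 - tr) - real (card (squares V E j i)) * \<gamma> / (1 + \<gamma>)
      \<le> (\<Sum>k\<in>triangles V E i j \<union> {j}. betweenness V E k)"
    using sum_far_nbrs_ge[OF sg, of i j] betweenness_sum_ge_far_nbrs[OF sg ij]
      card_nbrs_split[OF sg ij] by (simp add: deg_def tr_def \<gamma>_def)
  then have "inverse \<delta> \<le> (\<Sum>k\<in>triangles V E i j \<union> {j}. betweenness V E k) / (tr + 1)"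
    using inverse_le_average[OF assms(5) \<delta>\<gamma> _ _ _ deg] by (simp add: \<gamma>_def tr_def)
  moreover have "real (card (triangles V E i j \<union> {j})) = tr + 1"
    using finite_nbrs[OF sg] simple_graph_irrefl[OF sg]
    by (simp add: tr_def triangles_def mem_nbrs_iff[OF sg])
  ultimately show ?thesis by simp
qed

end
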